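(* Let $k,d\in\mathbb N$, let $\Gamma=(Z_{ij})_{d\times k}$ be a $d\times k$ categorical random matrix with rows $\mathbf Z_1^\top,\dots,\mathbf Z_d^\top$, and let $\mathbf U=(U_1,\dots,U_k)^\top$ have iid standard uniform components, independent of $\Gamma$. Define $\mathbf X=\Gamma\mathbf U=(\mathbf Z_1^\top\mathbf U,\dots,\mathbf Z_d^\top\mathbf U)$. Then: (i) each component of $\mathbf X$ is standard uniform; (ii) $\mathbf X$ has an invariant correlation matrix; (iii) the correlation matrix of $\mathbf X$ is $\mathbb E[\Gamma\Gamma^\top]$, and it equals the tail-dependence matrix of $\mathbf X$.
   Context: A $d\times k$ categorical random matrix is a random matrix with entries in $\{0,1\}$ such that each row sums to $1$. A random vector $\mathbf X$ (components non-degenerate with finite variance) has an invariant correlation matrix $R=(r_{ij})$ if $\mathrm{Corr}(X_i,X_j)=\mathrm{Corr}(g(X_i),g(X_j))=r_{ij}$ for all $i,j$ and every measurable $g$ such that all $g(X_i)$ are non-degenerate with finite variance. For continuous $X_i,X_j$ with distribution functions $F_i,F_j$, the (lower) tail-dependence coefficient is $\lim_{u\downarrow0}\mathbb P(F_i(X_i)\le u,F_j(X_j)\le u)/u$; the tail-dependence matrix has this coefficient as its $(i,j)$ entry. *)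

theory Defs
  imports "HOL-Probability.Probability"
begin

definition std_uniform :: "'a measure \<Rightarrow> ('a \<Rightarrow> real) \<Rightarrow> bool" where
  "std_uniform M Y \<longleftrightarrow> Y \<in> borel_measurable M \<and>
     distr M borel Y = uniform_measure lborel {0..1::real}"

definition indep_rv :: "'a measure \<Rightarrow> 'b measure \<Rightarrow> ('a \<Rightarrow> 'b) \<Rightarrow> 'c measure \<Rightarrow> ('a \<Rightarrow> 'c) \<Rightarrow> bool" where
  "indep_rv M Ma A Mb B \<longleftrightarrow> A \<in> measurable M Ma \<and> B \<in> measurable M Mb \<and>
     (\<forall>SA\<in>sets Ma. \<forall>SB\<in>sets Mb.
        measure M (A -` SA \<inter> B -` SB \<inter> space M)
          = measure M (A -` SA \<inter> space M) * measure M (B -` SB \<inter> space M))"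

definition categorical_matrix :: "'a measure \<Rightarrow> nat \<Rightarrow> nat \<Rightarrow> (nat \<Rightarrow> nat \<Rightarrow> 'a \<Rightarrow> real) \<Rightarrow> bool" where
  "categorical_matrix M d k Z \<longleftrightarrow>
     (\<forall>i<d. \<forall>j<k. Z i j \<in> borel_measurable M) \<and>
     (\<forall>\<omega>\<in>space M. \<forall>i<d. (\<forall>j<k. Z i j \<omega> \<in> {0,1}) \<and> (\<Sum>j<k. Z i j \<omega>) = 1)"

definition finite_var :: "'a measure \<Rightarrow> ('a \<Rightarrow> real) \<Rightarrow> bool" where
  "finite_var M Y \<longleftrightarrow> Y \<in> borel_measurable M \<and> integrable M (\<lambda>\<omega>. (Y \<omega>)\<^sup>2)"

definition nondegenerate :: "'a measure \<Rightarrow> ('a \<Rightarrow> real) \<Rightarrow> bool" where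
  "nondegenerate M Y \<longleftrightarrow> \<not> (\<exists>c. AE \<omega> in M. Y \<omega> = c)"

definition covar :: "'a measure \<Rightarrow> ('a \<Rightarrow> real) \<Rightarrow> ('a \<Rightarrow> real) \<Rightarrow> real" where
  "covar M Y W = (\<integral>\<omega>. (Y \<omega> - (\<integral>x. Y x \<partial>M)) * (W \<omega> - (\<integral>x. W x \<partial>M)) \<partial>M)"

definition corr :: "'a measure \<Rightarrow> ('a \<Rightarrow> real) \<Rightarrow> ('a \<Rightarrow> real) \<Rightarrow> real" where
  "corr M Y W = covar M Y W / sqrt (covar M Y Y * covar M W W)"

definition has_invariant_corr :: "'a measure \<Rightarrow> nat \<Rightarrow> (nat \<Rightarrow> 'a \<Rightarrow> real) \<Rightarrow> (nat \<Rightarrow> nat \<Rightarrow> real) \<Rightarrow> bool" where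
  "has_invariant_corr M d X R \<longleftrightarrow>
     (\<forall>i<d. finite_var M (X i) \<and> nondegenerate M (X i)) \<and>
     (\<forall>i<d. \<forall>j<d. corr M (X i) (X j) = R i j) \<and>
     (\<forall>g \<in> borel_measurable (borel :: real measure).
        (\<forall>i<d. finite_var M (\<lambda>\<omega>. g (X i \<omega>)) \<and> nondegenerate M (\<lambda>\<omega>. g (X i \<omega>))) \<longrightarrow>
        (\<forall>i<d. \<forall>j<d. corr M (\<lambda>\<omega>. g (X i \<omega>)) (\<lambda>\<omega>. g (X j \<omega>)) = R i j))"

definition has_tail_dep :: "'a measure \<Rightarrow> ('a \<Rightarrow> real) \<Rightarrow> ('a \<Rightarrow> real) \<Rightarrow> real \<Rightarrow> bool" where
  "has_tail_dep M Xi Xj l \<longleftrightarrow>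
     ((\<lambda>u. measure M {\<omega>\<in>space M. cdf (distr M borel Xi) (Xi \<omega>) \<le> u \<and>
                                   cdf (distr M borel Xj) (Xj \<omega>) \<le> u} / u)
       \<longlongrightarrow> l) (at_right 0)"

end

theory Submission
  imports Defs
begin

(* Row i of Gamma has a single entry 1, at a random position L_i, so X_i = U_(L_i) and
   h(X_i) = sum_l Z_il h(U_l) for every h.  As Gamma is independent of the iid uniforms U_l,
   for every square-integrable h
     E[h(X_i) h(X_j)] = (E h(U))^2 + Var h(U) * E[(Gamma Gamma^T)_ij].
   With h an indicator and i = j (where E[(Gamma Gamma^T)_ii] = 1) this shows that X_i is
   uniform; with h the indicator of (-inf, u] it gives
   P(X_i <= u, X_j <= u) = u^2 + (u - u^2) E[(Gamma Gamma^T)_ij], hence the tail dependence;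
   with h = g - E g(U) it gives Cov(g(X_i), g(X_j)) = Var g(U) * E[(Gamma Gamma^T)_ij], so the
   correlation of g(X_i) and g(X_j) does not depend on g. *)

abbreviation uniform01 :: "real measure" where
  "uniform01 \<equiv> uniform_measure lborel {0..1}"

interpretation uniform01: prob_space uniform01
  by (rule prob_space_uniform_measure) auto

lemma borel_measurable_uniform01_eq:
  "borel_measurable uniform01 = (borel_measurable borel :: (real \<Rightarrow> real) set)"
  by (rule measurable_cong_sets) simp_all

lemma integrable_uniform01_of_square:
  fixes h :: "real \<Rightarrow> real"
  assumes "h \<in> borel_measurable borel" "integrable uniform01 (\<lambda>x. (h x)\<^sup>2)"
  shows "integrable uniform01 h"
proof (rule uniform01.square_integrable_imp_integrable)
  show "h \<in> borel_measurable uniform01"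
    using assms(1) by (simp add: borel_measurable_uniform01_eq)
qed (fact assms(2))

lemma integrable_uniform01_indicator:
  "A \<in> sets borel \<Longrightarrow> integrable uniform01 (indicator A :: real \<Rightarrow> real)"
  using uniform01.emeasure_finite[of A]
  by (intro integrable_real_indicator) (auto simp: top.not_eq_extremum)

lemma cdf_uniform01: "cdf uniform01 x = max 0 (min x 1)"
proof (cases "x < 0")
  case True
  then have "{0..1} \<inter> {..x} = ({}::real set)" by auto
  then show ?thesis using True by (simp add: cdf_def)
next
  case False
  then have "{0..1} \<inter> {..x} = {0..min x 1}" by auto
  then show ?thesis using False by (simp add: cdf_def)
qed

lemma one_hot_comp_sum:
  fixes z u :: "nat \<Rightarrow> real"
  assumes z01: "\<And>l. l < k \<Longrightarrow> z l \<in> {0,1}" and z_sum: "(\<Sum>l<k. z l) = 1"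
  shows "h (\<Sum>l<k. z l * u l) = (\<Sum>l<k. z l * h (u l))"
proof -
  obtain l0 where l0: "l0 < k" "z l0 \<noteq> 0"
    using z_sum sum.neutral[of "{..<k}" z] by fastforce
  have "z l0 = 1" using l0 z01 by blast
  then have "(\<Sum>l\<in>{..<k} - {l0}. z l) = 0"
    using z_sum sum.remove[of "{..<k}" l0 z] l0(1) by simp
  then have others: "z l = 0" if "l < k" "l \<noteq> l0" for l
    using that z01 by (subst (asm) sum_nonneg_eq_0_iff) force+
  have collapse: "(\<Sum>l<k. z l * f l) = f l0" for f :: "nat \<Rightarrow> real"
    using sum.remove[of "{..<k}" l0 "\<lambda>l. z l * f l"] l0(1) \<open>z l0 = 1\<close> others by simp
  show ?thesis unfolding collapse ..
qed

lemma sum_product_diagonal_split: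
  fixes z w :: "nat \<Rightarrow> real"
  assumes "(\<Sum>l<k. z l) = 1" "(\<Sum>m<k. w m) = 1"
  shows "(\<Sum>(l,m)\<in>{..<k}\<times>{..<k}. z l * w m * (if l = m then b else c))
    = c + (b - c) * (\<Sum>l<k. z l * w l)"
proof -
  have split: "z l * w m * (if l = m then b else c)
      = c * (z l * w m) + (b - c) * (if l = m then z l * w l else 0)" for l m
    by (simp add: algebra_simps)
  have "(\<Sum>(l,m)\<in>{..<k}\<times>{..<k}. z l * w m * (if l = m then b else c))
      = c * (\<Sum>(l,m)\<in>{..<k}\<times>{..<k}. z l * w m)
        + (b - c) * (\<Sum>(l,m)\<in>{..<k}\<times>{..<k}. if l = m then z l * w l else 0)"
    by (simp add: split sum.distrib sum_distrib_left case_prod_unfold)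
  also have "(\<Sum>(l,m)\<in>{..<k}\<times>{..<k}. z l * w m) = (\<Sum>l<k. z l) * (\<Sum>m<k. w m)"
    by (simp add: sum_product sum.cartesian_product[symmetric])
  also have "(\<Sum>(l,m)\<in>{..<k}\<times>{..<k}. if l = m then z l * w l else 0) = (\<Sum>l<k. z l * w l)"
    by (simp add: sum.cartesian_product[symmetric])
  finally show ?thesis
    using assms by simp
qed

lemma std_uniform_integral:
  fixes h :: "real \<Rightarrow> 'b::{banach, second_countable_topology}"
  assumes "std_uniform M Y" "h \<in> borel_measurable borel"
  shows "(\<integral>\<omega>. h (Y \<omega>) \<partial>M) = (\<integral>x. h x \<partial>uniform01)"
  using assms integral_distr[of Y M borel h] unfolding std_uniform_def by simp

lemma std_uniform_integrable_iff:
  fixes h :: "real \<Rightarrow> 'b::{banach, second_countable_topology}"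
  assumes "std_uniform M Y" "h \<in> borel_measurable borel"
  shows "integrable M (\<lambda>\<omega>. h (Y \<omega>)) \<longleftrightarrow> integrable uniform01 h"
  using assms integrable_distr_eq[of Y M borel h] unfolding std_uniform_def by simp

lemma std_uniform_finite_var:
  assumes "std_uniform M Y"
  shows "finite_var M Y"
proof -
  have "integrable uniform01 (\<lambda>x::real. x\<^sup>2)"
  proof (rule uniform01.integrable_const_bound[where B=1])
    show "AE x in uniform01. norm (x\<^sup>2) \<le> (1::real)"
      by (rule AE_uniform_measureI) (auto simp: abs_le_iff power_le_one)
    show "(\<lambda>x::real. x\<^sup>2) \<in> borel_measurable uniform01"
      unfolding borel_measurable_uniform01_eq by measurable
  qed
  then show ?thesis
    using assms std_uniform_integrable_iff[OF assms, of "\<lambda>x. x\<^sup>2"]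
    unfolding finite_var_def std_uniform_def by simp
qed

lemma (in prob_space) std_uniform_nondegenerate:
  assumes "std_uniform M Y"
  shows "nondegenerate M Y"
  unfolding nondegenerate_def
proof
  assume "\<exists>c. AE \<omega> in M. Y \<omega> = c"
  then obtain c where "AE \<omega> in M. Y \<omega> = c" by blast
  moreover have "Y \<in> borel_measurable M" "distr M borel Y = uniform01"
    using assms unfolding std_uniform_def by auto
  ultimately have "AE x in distr M borel Y. x = c"
    using AE_distr_iff[of Y M borel "\<lambda>x. x = c"] by simp
  then have "AE x in uniform01. x = c"
    by (simp only: \<open>distr M borel Y = uniform01\<close>)
  then have "measure uniform01 {c} = 1"
    using uniform01.prob_Collect_eq_1[of "\<lambda>x. x = c"] by simp
  moreover have "measure uniform01 {c} = 0"
    by (cases "c \<in> {0..1}") (simp_all add: Int_absorb1 Int_absorb2 disjoint_iff)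
  ultimately show False by simp
qed

lemma (in prob_space) covar_self_pos:
  assumes "finite_var M Y" "nondegenerate M Y"
  shows "0 < covar M Y Y"
proof -
  define c where "c = expectation Y"
  have Y: "Y \<in> borel_measurable M" and Y2: "integrable M (\<lambda>\<omega>. (Y \<omega>)\<^sup>2)"
    using assms(1) unfolding finite_var_def by auto
  have Y1: "integrable M Y"
    using Y Y2 by (rule square_integrable_imp_integrable)
  have "(\<lambda>\<omega>. (Y \<omega> - c)\<^sup>2) = (\<lambda>\<omega>. (Y \<omega>)\<^sup>2 - 2 * c * Y \<omega> + c\<^sup>2)"
    by (simp add: power2_diff algebra_simps)
  then have int: "integrable M (\<lambda>\<omega>. (Y \<omega> - c)\<^sup>2)"
    using Y1 Y2 by simp
  have covar: "covar M Y Y = (\<integral>\<omega>. (Y \<omega> - c)\<^sup>2 \<partial>M)"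
    unfolding covar_def c_def power2_eq_square ..
  have "covar M Y Y \<noteq> 0"
  proof
    assume "covar M Y Y = 0"
    then have "AE \<omega> in M. (Y \<omega> - c)\<^sup>2 = 0"
      using integral_nonneg_eq_0_iff_AE[OF int] covar by simp
    then have "AE \<omega> in M. Y \<omega> = c"
      by eventually_elim simp
    then show False
      using assms(2) unfolding nondegenerate_def by blast
  qed
  moreover have "0 \<le> covar M Y Y"
    unfolding covar by simp
  ultimately show ?thesis by simp
qed

lemma has_tail_dep_std_uniformI:
  assumes Y: "std_uniform M Y" and W: "std_uniform M W"
    and joint: "\<And>u. 0 < u \<Longrightarrow> u < 1 \<Longrightarrow>
      measure M {\<omega>\<in>space M. Y \<omega> \<le> u \<and> W \<omega> \<le> u} = u\<^sup>2 + (u - u\<^sup>2) * p"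
  shows "has_tail_dep M Y W p"
proof -
  have "measure M {\<omega>\<in>space M. cdf (distr M borel Y) (Y \<omega>) \<le> u \<and>
        cdf (distr M borel W) (W \<omega>) \<le> u} / u = u + (1 - u) * p"
    if "0 < u" "u < 1" for u
  proof -
    have "max 0 (min x 1) \<le> u \<longleftrightarrow> x \<le> u" for x :: real
      using that by (auto simp: max_def min_def)
    then show ?thesis
      using Y W joint[OF that] that
      by (simp add: std_uniform_def cdf_uniform01 field_simps power2_eq_square)
  qed
  then have "\<forall>\<^sub>F u in at_right 0.
      measure M {\<omega>\<in>space M. cdf (distr M borel Y) (Y \<omega>) \<le> u \<and>
        cdf (distr M borel W) (W \<omega>) \<le> u} / u = u + (1 - u) * p"
    unfolding eventually_at_right_field by (intro exI[of _ 1]) auto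
  moreover have "((\<lambda>u. u + (1 - u) * p) \<longlongrightarrow> 0 + (1 - 0) * p) (at_right 0)"
    by (intro tendsto_intros)
  ultimately show ?thesis
    unfolding has_tail_dep_def by (simp add: tendsto_cong)
qed

lemma sigma_sets_vimage_comp_subset:
  assumes A: "A \<in> measurable M Ma" and F: "F \<in> measurable Ma N"
  shows "sigma_sets (space M) {(\<lambda>\<omega>. F (A \<omega>)) -` S \<inter> space M | S. S \<in> sets N}
    \<subseteq> {A -` S \<inter> space M | S. S \<in> sets Ma}"
proof -
  have "{(\<lambda>\<omega>. F (A \<omega>)) -` S \<inter> space M | S. S \<in> sets N} \<subseteq> {A -` S \<inter> space M | S. S \<in> sets Ma}"
  proof safe
    fix S assume "S \<in> sets N"
    then have "F -` S \<inter> space Ma \<in> sets Ma" using F by (rule measurable_sets[rotated])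
    moreover have "(\<lambda>\<omega>. F (A \<omega>)) -` S \<inter> space M = A -` (F -` S \<inter> space Ma) \<inter> space M"
      using measurable_space[OF A] by blast
    ultimately show "\<exists>S'. (\<lambda>\<omega>. F (A \<omega>)) -` S \<inter> space M = A -` S' \<inter> space M \<and> S' \<in> sets Ma"
      by blast
  qed
  then have "sigma_sets (space M) {(\<lambda>\<omega>. F (A \<omega>)) -` S \<inter> space M | S. S \<in> sets N}
      \<subseteq> sigma_sets (space M) {A -` S \<inter> space M | S. S \<in> sets Ma}"
    by (rule sigma_sets_mono')
  also have "\<dots> = {A -` S \<inter> space M | S. S \<in> sets Ma}"
    using sets_vimage_algebra[of "space M" A Ma] sets_vimage_algebra2[of A "space M" Ma]
      measurable_space[OF A] by auto
  finally show ?thesis .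
qed

(* indep_var requires both variables to take values in the same space, whence the common N. *)
lemma (in prob_space) indep_var_comp_if_indep_rv:
  assumes indep: "indep_rv M Ma A Mb B" and F: "F \<in> measurable Ma N" and G: "G \<in> measurable Mb N"
  shows "indep_var N (\<lambda>\<omega>. F (A \<omega>)) N (\<lambda>\<omega>. G (B \<omega>))"
proof -
  have A: "A \<in> measurable M Ma" and B: "B \<in> measurable M Mb"
    and mult: "\<And>SA SB. SA \<in> sets Ma \<Longrightarrow> SB \<in> sets Mb \<Longrightarrow>
      prob (A -` SA \<inter> B -` SB \<inter> space M) = prob (A -` SA \<inter> space M) * prob (B -` SB \<inter> space M)"
    using indep unfolding indep_rv_def by auto
  note sub_A = sigma_sets_vimage_comp_subset[OF A F]
  note sub_B = sigma_sets_vimage_comp_subset[OF B G]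
  have events_A: "{A -` S \<inter> space M | S. S \<in> sets Ma} \<subseteq> events"
    using measurable_sets[OF A] by blast
  have events_B: "{B -` S \<inter> space M | S. S \<in> sets Mb} \<subseteq> events"
    using measurable_sets[OF B] by blast
  show ?thesis
    unfolding indep_var_eq
  proof (intro conjI indep_setI)
    show "random_variable N (\<lambda>\<omega>. F (A \<omega>))" by (rule measurable_compose[OF A F])
    show "random_variable N (\<lambda>\<omega>. G (B \<omega>))" by (rule measurable_compose[OF B G])
    show "sigma_sets (space M) {(\<lambda>\<omega>. F (A \<omega>)) -` S \<inter> space M | S. S \<in> sets N} \<subseteq> events"
      using sub_A events_A by (rule subset_trans)
    show "sigma_sets (space M) {(\<lambda>\<omega>. G (B \<omega>)) -` S \<inter> space M | S. S \<in> sets N} \<subseteq> events"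
      using sub_B events_B by (rule subset_trans)
  next
    fix a b
    assume "a \<in> sigma_sets (space M) {(\<lambda>\<omega>. F (A \<omega>)) -` S \<inter> space M | S. S \<in> sets N}"
      and "b \<in> sigma_sets (space M) {(\<lambda>\<omega>. G (B \<omega>)) -` S \<inter> space M | S. S \<in> sets N}"
    then have "a \<in> {A -` S \<inter> space M | S. S \<in> sets Ma}" "b \<in> {B -` S \<inter> space M | S. S \<in> sets Mb}"
      using sub_A sub_B by (auto dest: subsetD)
    then obtain SA SB where "SA \<in> sets Ma" "a = A -` SA \<inter> space M" "SB \<in> sets Mb" "b = B -` SB \<inter> space M"
      by blast
    moreover have "a \<inter> b = A -` SA \<inter> B -` SB \<inter> space M"
      using calculation by blast
    ultimately show "prob (a \<inter> b) = prob a * prob b"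
      using mult by simp
  qed
qed

locale categorical_mixture = prob_space M for M :: "'a measure" +
  fixes d k :: nat and Z :: "nat \<Rightarrow> nat \<Rightarrow> 'a \<Rightarrow> real" and U X :: "nat \<Rightarrow> 'a \<Rightarrow> real"
  assumes categorical: "categorical_matrix M d k Z"
    and std_uniform_U: "\<And>j. j < k \<Longrightarrow> std_uniform M (U j)"
    and indep_U: "indep_vars (\<lambda>_. borel) U {..<k}"
    and indep_Z_U: "indep_rv M
      (PiM ({..<d} \<times> {..<k}) (\<lambda>_. borel)) (\<lambda>\<omega>. \<lambda>(i,j)\<in>{..<d} \<times> {..<k}. Z i j \<omega>)
      (PiM {..<k} (\<lambda>_. borel)) (\<lambda>\<omega>. \<lambda>j\<in>{..<k}. U j \<omega>)"
    and X_eq: "\<And>i \<omega>. X i \<omega> = (\<Sum>j<k. Z i j \<omega> * U j \<omega>)"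
begin

definition mean_gram :: "nat \<Rightarrow> nat \<Rightarrow> real" where
  "mean_gram i j = (\<integral>\<omega>. (\<Sum>l<k. Z i l \<omega> * Z j l \<omega>) \<partial>M)"

lemma Z_measurable[measurable]: "i < d \<Longrightarrow> l < k \<Longrightarrow> Z i l \<in> borel_measurable M"
  using categorical unfolding categorical_matrix_def by auto

lemma Z_01: "\<omega> \<in> space M \<Longrightarrow> i < d \<Longrightarrow> l < k \<Longrightarrow> Z i l \<omega> \<in> {0, 1}"
  using categorical unfolding categorical_matrix_def by auto

lemma Z_row_sum: "\<omega> \<in> space M \<Longrightarrow> i < d \<Longrightarrow> (\<Sum>l<k. Z i l \<omega>) = 1"
  using categorical unfolding categorical_matrix_def by auto

lemma U_measurable[measurable]: "l < k \<Longrightarrow> U l \<in> borel_measurable M"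
  using std_uniform_U unfolding std_uniform_def by auto

lemma X_measurable[measurable]: "i < d \<Longrightarrow> X i \<in> borel_measurable M"
  unfolding X_eq[abs_def] by measurable

lemma comp_X_eq: "\<omega> \<in> space M \<Longrightarrow> i < d \<Longrightarrow> h (X i \<omega>) = (\<Sum>l<k. Z i l \<omega> * h (U l \<omega>))"
  unfolding X_eq using Z_01 Z_row_sum by (intro one_hot_comp_sum) auto

lemma integrable_Z_mult:
  assumes "i < d" "j < d" "l < k" "m < k"
  shows "integrable M (\<lambda>\<omega>. Z i l \<omega> * Z j m \<omega> * c)"
proof (rule integrable_const_bound[where B="\<bar>c\<bar>"])
  have "\<bar>Z i l \<omega> * Z j m \<omega> * c\<bar> \<le> \<bar>c\<bar>" if "\<omega> \<in> space M" for \<omega>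
    using Z_01[OF that assms(1,3)] Z_01[OF that assms(2,4)] by auto
  then show "AE \<omega> in M. norm (Z i l \<omega> * Z j m \<omega> * c) \<le> \<bar>c\<bar>"
    by (intro AE_I2) simp
qed (use assms in measurable)

lemma mean_gram_diag:
  assumes "i < d"
  shows "mean_gram i i = 1"
proof -
  have "(\<Sum>l<k. Z i l \<omega> * Z i l \<omega>) = 1" if "\<omega> \<in> space M" for \<omega>
  proof -
    have "Z i l \<omega> * Z i l \<omega> = Z i l \<omega>" if "l < k" for l
      using Z_01[OF \<open>\<omega> \<in> space M\<close> assms that] by auto
    then have "(\<Sum>l<k. Z i l \<omega> * Z i l \<omega>) = (\<Sum>l<k. Z i l \<omega>)"
      by (intro sum.cong) auto
    then show ?thesis using Z_row_sum[OF that assms] by simp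
  qed
  then have "mean_gram i i = (\<integral>\<omega>. 1 \<partial>M)"
    unfolding mean_gram_def by (intro Bochner_Integration.integral_cong) auto
  then show ?thesis by (simp add: prob_space)
qed

lemma integral_comp_U_mult:
  fixes h :: "real \<Rightarrow> real"
  assumes l: "l < k" and m: "m < k" and h[measurable]: "h \<in> borel_measurable borel"
    and h2: "integrable uniform01 (\<lambda>x. (h x)\<^sup>2)"
  shows "integrable M (\<lambda>\<omega>. h (U l \<omega>) * h (U m \<omega>))"
    and "(\<integral>\<omega>. h (U l \<omega>) * h (U m \<omega>) \<partial>M)
      = (if l = m then (\<integral>x. (h x)\<^sup>2 \<partial>uniform01) else (\<integral>x. h x \<partial>uniform01)\<^sup>2)"
proof -
  have int_h: "integrable M (\<lambda>\<omega>. h (U n \<omega>))" if "n < k" for n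
    using std_uniform_integrable_iff[OF std_uniform_U[OF that] h]
      integrable_uniform01_of_square[OF h h2] by simp
  have "integrable M (\<lambda>\<omega>. h (U l \<omega>) * h (U m \<omega>)) \<and>
    (\<integral>\<omega>. h (U l \<omega>) * h (U m \<omega>) \<partial>M)
      = (if l = m then (\<integral>x. (h x)\<^sup>2 \<partial>uniform01) else (\<integral>x. h x \<partial>uniform01)\<^sup>2)"
  proof (cases "l = m")
    case True
    then show ?thesis
      using std_uniform_integrable_iff[OF std_uniform_U[OF l], of "\<lambda>x. (h x)\<^sup>2"]
        std_uniform_integral[OF std_uniform_U[OF l], of "\<lambda>x. (h x)\<^sup>2"] h2
      by (simp add: power2_eq_square)
  next
    case False
    have indep: "indep_vars (\<lambda>_. borel) (\<lambda>n \<omega>. h (U n \<omega>)) {l, m}"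
      using l m by (intro indep_vars_compose2[OF indep_vars_subset[OF indep_U]]) auto
    have int_lm: "\<And>n. n \<in> {l, m} \<Longrightarrow> integrable M (\<lambda>\<omega>. h (U n \<omega>))"
      using int_h l m by auto
    show ?thesis
      using indep_vars_lebesgue_integral[OF _ indep int_lm] indep_vars_integrable[OF _ indep int_lm]
        l m False std_uniform_integral[OF std_uniform_U h]
      by (simp add: power2_eq_square)
  qed
  then show "integrable M (\<lambda>\<omega>. h (U l \<omega>) * h (U m \<omega>))"
    and "(\<integral>\<omega>. h (U l \<omega>) * h (U m \<omega>) \<partial>M)
      = (if l = m then (\<integral>x. (h x)\<^sup>2 \<partial>uniform01) else (\<integral>x. h x \<partial>uniform01)\<^sup>2)"
    by auto
qed

lemma integral_Z_mult_comp_U_mult: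
  fixes h :: "real \<Rightarrow> real"
  assumes i: "i < d" and j: "j < d" and l: "l < k" and m: "m < k"
    and h[measurable]: "h \<in> borel_measurable borel" and h2: "integrable uniform01 (\<lambda>x. (h x)\<^sup>2)"
  shows "integrable M (\<lambda>\<omega>. Z i l \<omega> * Z j m \<omega> * (h (U l \<omega>) * h (U m \<omega>)))"
    and "(\<integral>\<omega>. Z i l \<omega> * Z j m \<omega> * (h (U l \<omega>) * h (U m \<omega>)) \<partial>M)
      = (\<integral>\<omega>. Z i l \<omega> * Z j m \<omega> \<partial>M) * (\<integral>\<omega>. h (U l \<omega>) * h (U m \<omega>) \<partial>M)"
proof -
  define F where "F z = z (i, l) * z (j, m)" for z :: "nat \<times> nat \<Rightarrow> real"
  define G where "G u = h (u l) * h (u m)" for u :: "nat \<Rightarrow> real"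
  have F: "F \<in> borel_measurable (PiM ({..<d} \<times> {..<k}) (\<lambda>_. borel))"
    unfolding F_def using i j l m
    by (intro borel_measurable_times measurable_component_singleton) auto
  have G: "G \<in> borel_measurable (PiM {..<k} (\<lambda>_. borel))"
    unfolding G_def using l m
    by (intro borel_measurable_times measurable_compose[OF _ h] measurable_component_singleton) auto
  have "(\<lambda>\<omega>. F (\<lambda>(i, j)\<in>{..<d} \<times> {..<k}. Z i j \<omega>)) = (\<lambda>\<omega>. Z i l \<omega> * Z j m \<omega>)"
    using i j l m by (simp add: F_def)
  moreover have "(\<lambda>\<omega>. G (\<lambda>j\<in>{..<k}. U j \<omega>)) = (\<lambda>\<omega>. h (U l \<omega>) * h (U m \<omega>))"
    using l m by (simp add: G_def)
  ultimately have indep: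
    "indep_var borel (\<lambda>\<omega>. Z i l \<omega> * Z j m \<omega>) borel (\<lambda>\<omega>. h (U l \<omega>) * h (U m \<omega>))"
    using indep_var_comp_if_indep_rv[OF indep_Z_U F G] by simp
  have int_Z: "integrable M (\<lambda>\<omega>. Z i l \<omega> * Z j m \<omega>)"
    using integrable_Z_mult[OF i j l m, of 1] by simp
  note int_U = integral_comp_U_mult(1)[OF l m h h2]
  show "integrable M (\<lambda>\<omega>. Z i l \<omega> * Z j m \<omega> * (h (U l \<omega>) * h (U m \<omega>)))"
    by (rule indep_var_integrable[OF indep int_Z int_U])
  show "(\<integral>\<omega>. Z i l \<omega> * Z j m \<omega> * (h (U l \<omega>) * h (U m \<omega>)) \<partial>M)
      = (\<integral>\<omega>. Z i l \<omega> * Z j m \<omega> \<partial>M) * (\<integral>\<omega>. h (U l \<omega>) * h (U m \<omega>) \<partial>M)"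
    by (rule indep_var_lebesgue_integral[OF indep int_Z int_U])
qed

lemma integral_comp_X_mult:
  fixes h :: "real \<Rightarrow> real"
  assumes i: "i < d" and j: "j < d"
    and h[measurable]: "h \<in> borel_measurable borel" and h2: "integrable uniform01 (\<lambda>x. (h x)\<^sup>2)"
  defines "a \<equiv> \<integral>x. h x \<partial>uniform01" and "b \<equiv> \<integral>x. (h x)\<^sup>2 \<partial>uniform01"
  shows "(\<integral>\<omega>. h (X i \<omega>) * h (X j \<omega>) \<partial>M) = a\<^sup>2 + (b - a\<^sup>2) * mean_gram i j"
proof -
  let ?P = "{..<k} \<times> {..<k}"
  define T where
    "T = (\<lambda>p \<omega>. Z i (fst p) \<omega> * Z j (snd p) \<omega> * (h (U (fst p) \<omega>) * h (U (snd p) \<omega>)))"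
  define c where "c p = (if fst p = snd p then b else a\<^sup>2)" for p :: "nat \<times> nat"
  have T_int: "integrable M (T p)"
    and T_integral: "integral\<^sup>L M (T p) = (\<integral>\<omega>. Z i (fst p) \<omega> * Z j (snd p) \<omega> * c p \<partial>M)"
    if "p \<in> ?P" for p
    using that integral_Z_mult_comp_U_mult[OF i j _ _ h h2, of "fst p" "snd p"]
      integral_comp_U_mult(2)[OF _ _ h h2, of "fst p" "snd p"]
    by (auto simp: T_def c_def a_def b_def mem_Times_iff)
  have "(\<integral>\<omega>. h (X i \<omega>) * h (X j \<omega>) \<partial>M) = (\<integral>\<omega>. (\<Sum>p\<in>?P. T p \<omega>) \<partial>M)"
    using i j by (intro Bochner_Integration.integral_cong)
      (simp_all add: comp_X_eq sum_product sum.cartesian_product T_def case_prod_unfold mult_ac)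
  also have "\<dots> = (\<Sum>p\<in>?P. integral\<^sup>L M (T p))"
    using T_int by (rule Bochner_Integration.integral_sum)
  also have "\<dots> = (\<Sum>p\<in>?P. \<integral>\<omega>. Z i (fst p) \<omega> * Z j (snd p) \<omega> * c p \<partial>M)"
    using T_integral by simp
  also have "\<dots> = (\<integral>\<omega>. (\<Sum>p\<in>?P. Z i (fst p) \<omega> * Z j (snd p) \<omega> * c p) \<partial>M)"
    using i j by (intro Bochner_Integration.integral_sum[symmetric] integrable_Z_mult)
      (auto simp: mem_Times_iff)
  also have "\<dots> = (\<integral>\<omega>. a\<^sup>2 + (b - a\<^sup>2) * (\<Sum>l<k. Z i l \<omega> * Z j l \<omega>) \<partial>M)"
    using i j Z_row_sum
      sum_product_diagonal_split[where z="\<lambda>l. Z i l _" and w="\<lambda>l. Z j l _" and b=b and c="a\<^sup>2"]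
    by (intro Bochner_Integration.integral_cong) (simp_all add: c_def case_prod_unfold)
  also have "\<dots> = a\<^sup>2 + (b - a\<^sup>2) * mean_gram i j"
  proof -
    have "integrable M (\<lambda>\<omega>. \<Sum>l<k. Z i l \<omega> * Z j l \<omega>)"
      using i j integrable_Z_mult[of i j _ _ 1] by (intro Bochner_Integration.integrable_sum) simp
    then show ?thesis
      by (simp add: mean_gram_def prob_space)
  qed
  finally show ?thesis .
qed

lemma measure_X_eq:
  assumes i: "i < d" and j: "j < d" and A: "A \<in> sets borel"
  shows "measure M {\<omega>\<in>space M. X i \<omega> \<in> A \<and> X j \<omega> \<in> A}
    = (measure uniform01 A)\<^sup>2 + (measure uniform01 A - (measure uniform01 A)\<^sup>2) * mean_gram i j"
proof -
  have [measurable]: "A \<in> sets borel" by (fact A)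
  have ind_sq: "(indicator A x :: real)\<^sup>2 = indicator A x" for x
    by (simp add: indicator_def)
  have "measure M {\<omega>\<in>space M. X i \<omega> \<in> A \<and> X j \<omega> \<in> A}
      = (\<integral>\<omega>. indicator {\<omega>\<in>space M. X i \<omega> \<in> A \<and> X j \<omega> \<in> A} \<omega> \<partial>M)"
    by (simp add: Int_absorb2)
  also have "\<dots> = (\<integral>\<omega>. indicator A (X i \<omega>) * indicator A (X j \<omega>) \<partial>M)"
    by (intro Bochner_Integration.integral_cong) (auto simp: indicator_def)
  also have "\<dots> = (measure uniform01 A)\<^sup>2 + (measure uniform01 A - (measure uniform01 A)\<^sup>2) * mean_gram i j"
    using integral_comp_X_mult[OF i j, of "indicator A"] integrable_uniform01_indicator[OF A]
    by (simp add: ind_sq)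
  finally show ?thesis .
qed

lemma std_uniform_X:
  assumes i: "i < d"
  shows "std_uniform M (X i)"
  unfolding std_uniform_def
proof (intro conjI measure_eqI)
  fix A assume "A \<in> sets (distr M borel (X i))"
  then have A: "A \<in> sets borel" by simp
  have "emeasure (distr M borel (X i)) A = measure M {\<omega>\<in>space M. X i \<omega> \<in> A}"
    using i A by (simp add: emeasure_distr emeasure_eq_measure vimage_def Int_def conj_commute)
  also have "\<dots> = measure uniform01 A"
    using measure_X_eq[OF i i A] mean_gram_diag[OF i] by simp
  also have "\<dots> = emeasure uniform01 A"
    by (simp add: uniform01.emeasure_eq_measure)
  finally show "emeasure (distr M borel (X i)) A = emeasure uniform01 A" .
qed (use i in simp_all)

lemma covar_comp_X:
  fixes g :: "real \<Rightarrow> real"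
  assumes i: "i < d" and j: "j < d" and g[measurable]: "g \<in> borel_measurable borel"
    and g2: "integrable uniform01 (\<lambda>x. (g x)\<^sup>2)"
  defines "a \<equiv> \<integral>x. g x \<partial>uniform01"
  shows "covar M (\<lambda>\<omega>. g (X i \<omega>)) (\<lambda>\<omega>. g (X j \<omega>))
    = (\<integral>x. (g x - a)\<^sup>2 \<partial>uniform01) * mean_gram i j"
proof -
  have g1: "integrable uniform01 g" by (rule integrable_uniform01_of_square[OF g g2])
  have h2: "integrable uniform01 (\<lambda>x. (g x - a)\<^sup>2)"
    using g1 g2 by (simp add: power2_diff uniform01.integrable_const)
  have "(\<integral>x. g x - a \<partial>uniform01) = 0"
    using g1 by (simp add: a_def uniform01.integrable_const uniform01.prob_space)
  then show ?thesis
    using integral_comp_X_mult[OF i j _ h2] std_uniform_integral[OF std_uniform_X g] i j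
    by (simp add: covar_def a_def)
qed

lemma corr_comp_X:
  fixes g :: "real \<Rightarrow> real"
  assumes i: "i < d" and j: "j < d" and g[measurable]: "g \<in> borel_measurable borel"
    and finite_var: "finite_var M (\<lambda>\<omega>. g (X i \<omega>))"
    and nondeg: "nondegenerate M (\<lambda>\<omega>. g (X i \<omega>))"
  shows "corr M (\<lambda>\<omega>. g (X i \<omega>)) (\<lambda>\<omega>. g (X j \<omega>)) = mean_gram i j"
proof -
  have g2: "integrable uniform01 (\<lambda>x. (g x)\<^sup>2)"
    using finite_var std_uniform_integrable_iff[OF std_uniform_X[OF i], of "\<lambda>x. (g x)\<^sup>2"]
    unfolding finite_var_def by simp
  define v where "v = (\<integral>x. (g x - (\<integral>x. g x \<partial>uniform01))\<^sup>2 \<partial>uniform01)"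
  have "v > 0"
    using covar_self_pos[OF finite_var nondeg] covar_comp_X[OF i i g g2] mean_gram_diag[OF i]
    by (simp add: v_def)
  then show ?thesis
    using covar_comp_X[OF _ _ g g2] mean_gram_diag i j
    by (simp add: corr_def v_def[symmetric])
qed

lemma measure_X_le:
  assumes i: "i < d" and j: "j < d" and u: "0 < u" "u < 1"
  shows "measure M {\<omega>\<in>space M. X i \<omega> \<le> u \<and> X j \<omega> \<le> u} = u\<^sup>2 + (u - u\<^sup>2) * mean_gram i j"
  using measure_X_eq[OF i j, of "{..u}"] cdf_uniform01[of u] u by (simp add: cdf_def)

end

theorem proposition8:
  fixes M :: "'a measure" and d k :: nat
    and Z :: "nat \<Rightarrow> nat \<Rightarrow> 'a \<Rightarrow> real" and U :: "nat \<Rightarrow> 'a \<Rightarrow> real"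
    and X :: "nat \<Rightarrow> 'a \<Rightarrow> real"
  assumes "prob_space M"
    and "categorical_matrix M d k Z"
    and "\<And>j. j < k \<Longrightarrow> std_uniform M (U j)"
    and "prob_space.indep_vars M (\<lambda>_. borel) U {..<k}"
    and "indep_rv M
           (PiM ({..<d} \<times> {..<k}) (\<lambda>_. borel)) (\<lambda>\<omega>. \<lambda>(i,j)\<in>{..<d} \<times> {..<k}. Z i j \<omega>)
           (PiM {..<k} (\<lambda>_. borel)) (\<lambda>\<omega>. \<lambda>j\<in>{..<k}. U j \<omega>)"
    and "\<And>i \<omega>. X i \<omega> = (\<Sum>j<k. Z i j \<omega> * U j \<omega>)"
  shows "(\<forall>i<d. std_uniform M (X i))
    \<and> (\<exists>R. has_invariant_corr M d X R)
    \<and> (\<forall>i<d. \<forall>j<d.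
          corr M (X i) (X j) = (\<integral>\<omega>. (\<Sum>l<k. Z i l \<omega> * Z j l \<omega>) \<partial>M)
        \<and> has_tail_dep M (X i) (X j) (\<integral>\<omega>. (\<Sum>l<k. Z i l \<omega> * Z j l \<omega>) \<partial>M))"
proof -
  interpret categorical_mixture M d k Z U X
    by (rule categorical_mixture.intro[OF assms(1) categorical_mixture_axioms.intro[OF assms(2-6)]])
  have moments: "finite_var M (X i)" "nondegenerate M (X i)" if "i < d" for i
    using std_uniform_X[OF that] by (simp_all add: std_uniform_finite_var std_uniform_nondegenerate)
  have corr: "corr M (X i) (X j) = mean_gram i j" if "i < d" "j < d" for i j
    using corr_comp_X[OF that, of "\<lambda>x. x"] moments[OF that(1)] by simp
  have "has_invariant_corr M d X mean_gram"
    unfolding has_invariant_corr_def using moments corr corr_comp_X by simp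
  moreover have "has_tail_dep M (X i) (X j) (mean_gram i j)" if "i < d" "j < d" for i j
    using that by (intro has_tail_dep_std_uniformI std_uniform_X measure_X_le)
  ultimately show ?thesis
    using std_uniform_X corr unfolding mean_gram_def by blast
qed

end
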